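(* Let $X$ be a set, $B=(B,+,0)$ a unitary magma and $(A,k,q,s,p)$ a retraction point from $X$ to $B$. Define $\varphi\colon X\times B\times X\times B\to X$ by $$\varphi(x,b,x',b')=q\big((k(x)+s(b))+(k(x')+s(b'))\big).$$ Then $(X,\varphi)$ is a $B$-action.
   Context: A unitary magma is a set with a binary operation $+$ and an element $0$ with $b+0=b=0+b$ for all $b$; morphisms preserve $+$ and $0$. Given a set $X$ and a unitary magma $B$, a retraction point from $X$ to $B$ is a tuple $(A,k,q,s,p)$ where $A=(A,+,0)$ is a unitary magma, $k\colon X\to A$ and $q\colon A\to X$ are maps, $s\colon B\to A$ and $p\colon A\to B$ are morphisms of unitary magmas, and $p(s(b))=b$, $q(k(x))=x$, $p(k(x))=0$, $q(s(b))=q(0)$, and $k(q(a))+s(p(a))=a$ for all $x\in X$, $b\in B$, $a\in A$. A $B$-action is a pair $(X,\varphi)$ with $X$ a set and $\varphi\colon X\times B\times X\times B\to X$ a map such that: (1) there is an element $0\in X$ with $\varphi(x,0,0,0)=x=\varphi(0,0,x,0)$ for all $x\in X$; (2) $\varphi(x,b,0,0)=\varphi(x,0,0,b)=\varphi(0,0,x,b)$ for all $x\in X,b\in B$; (3) $\varphi(0,b,0,b')=0$ for all $b,b'\in B$; (4) writing $\varphi_{00}(x,b)=\varphi(x,0,0,b)$, for all $x,x'\in X$, $b,b'\in B$: $\varphi(x,b,x',b')=\varphi_{00}\big(\varphi(\varphi_{00}(x,b),b,\varphi_{00}(x',b'),b'),\,b+b'\big)$. *)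

theory Defs
  imports Main
begin

text \<open>Sets are modelled as types: the set X is the type 'x, a unitary magma
  (B,+,0) is a type 'b with an operation and a distinguished element.\<close>

definition unitary_magma :: "('b \<Rightarrow> 'b \<Rightarrow> 'b) \<Rightarrow> 'b \<Rightarrow> bool" where
  "unitary_magma add z \<longleftrightarrow> (\<forall>b. add b z = b \<and> add z b = b)"

definition magma_hom ::
  "('a \<Rightarrow> 'a \<Rightarrow> 'a) \<Rightarrow> 'a \<Rightarrow> ('b \<Rightarrow> 'b \<Rightarrow> 'b) \<Rightarrow> 'b \<Rightarrow> ('a \<Rightarrow> 'b) \<Rightarrow> bool" where
  "magma_hom addA zA addB zB f \<longleftrightarrow>
     (\<forall>x y. f (addA x y) = addB (f x) (f y)) \<and> f zA = zB"

definition retraction_point ::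
  "('b \<Rightarrow> 'b \<Rightarrow> 'b) \<Rightarrow> 'b \<Rightarrow> ('a \<Rightarrow> 'a \<Rightarrow> 'a) \<Rightarrow> 'a \<Rightarrow>
   ('x \<Rightarrow> 'a) \<Rightarrow> ('a \<Rightarrow> 'x) \<Rightarrow> ('b \<Rightarrow> 'a) \<Rightarrow> ('a \<Rightarrow> 'b) \<Rightarrow> bool" where
  "retraction_point addB zB addA zA k q s p \<longleftrightarrow>
     unitary_magma addA zA \<and>
     magma_hom addB zB addA zA s \<and> magma_hom addA zA addB zB p \<and>
     (\<forall>b. p (s b) = b) \<and> (\<forall>x. q (k x) = x) \<and> (\<forall>x. p (k x) = zB) \<and>
     (\<forall>b. q (s b) = q zA) \<and> (\<forall>a. addA (k (q a)) (s (p a)) = a)"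

definition B_action ::
  "('b \<Rightarrow> 'b \<Rightarrow> 'b) \<Rightarrow> 'b \<Rightarrow> ('x \<Rightarrow> 'b \<Rightarrow> 'x \<Rightarrow> 'b \<Rightarrow> 'x) \<Rightarrow> bool" where
  "B_action addB zB \<phi> \<longleftrightarrow>
     (\<exists>z::'x.
        (\<forall>x. \<phi> x zB z zB = x \<and> \<phi> z zB x zB = x) \<and>
        (\<forall>x b. \<phi> x b z zB = \<phi> x zB z b \<and> \<phi> x zB z b = \<phi> z zB x b) \<and>
        (\<forall>b b'. \<phi> z b z b' = z) \<and>
        (\<forall>x x' b b'. \<phi> x b x' b' =
            \<phi> (\<phi> (\<phi> x zB z b) b (\<phi> x' zB z b') b') zB z (addB b b')))"

end

theory Submission
  imports Defs
begin

text \<open>Every a in A decomposes as k (q a) + s (p a), and p sends both k x + s b and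
  (k x + s b) + (k x' + s b') to the B-component b, resp. b + b'. Hence k (q a) + s b = a
  whenever a is one of these elements: applying q after re-attaching the B-component loses
  nothing. Each axiom of a B-action reduces to this cancellation together with
  k (q 0) = 0 and q (s b) = q 0.\<close>

locale retraction_point_over_unitary_magma =
  fixes addB :: "'b \<Rightarrow> 'b \<Rightarrow> 'b" and zB :: 'b
    and addA :: "'a \<Rightarrow> 'a \<Rightarrow> 'a" (infixl "\<oplus>" 65) and zA :: 'a
    and k :: "'x \<Rightarrow> 'a" and q :: "'a \<Rightarrow> 'x" and s :: "'b \<Rightarrow> 'a" and p :: "'a \<Rightarrow> 'b"
  assumes unitary_B: "unitary_magma addB zB"
    and retraction: "retraction_point addB zB addA zA k q s p"
begin

definition induced_action :: "'x \<Rightarrow> 'b \<Rightarrow> 'x \<Rightarrow> 'b \<Rightarrow> 'x" where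
  "induced_action x b x' b' = q ((k x \<oplus> s b) \<oplus> (k x' \<oplus> s b'))"

lemma addB_zero [simp]: "addB b zB = b" "addB zB b = b"
  using unitary_B unfolding unitary_magma_def by auto

lemma addA_zero [simp]: "a \<oplus> zA = a" "zA \<oplus> a = a"
  using retraction unfolding retraction_point_def unitary_magma_def by auto

lemma s_add: "s (addB b b') = s b \<oplus> s b'" and s_zero [simp]: "s zB = zA"
  using retraction unfolding retraction_point_def magma_hom_def by auto

lemma p_add [simp]: "p (a \<oplus> a') = addB (p a) (p a')" and p_zero [simp]: "p zA = zB"
  using retraction unfolding retraction_point_def magma_hom_def by auto

lemma p_s [simp]: "p (s b) = b" and q_k [simp]: "q (k x) = x" and p_k [simp]: "p (k x) = zB"
    and q_s [simp]: "q (s b) = q zA" and k_q_add_s_p: "k (q a) \<oplus> s (p a) = a"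
  using retraction unfolding retraction_point_def by auto

lemma k_q_add_s_cancel: "p a = b \<Longrightarrow> k (q a) \<oplus> s b = a"
  using k_q_add_s_p by blast

lemma k_q_zero [simp]: "k (q zA) = zA"
  using k_q_add_s_p [of zA] by simp

lemma induced_action_zero_zero: "induced_action x zB (q zA) b = q (k x \<oplus> s b)"
  by (simp add: induced_action_def)

lemma induced_action_zero_eq: "induced_action x b (q zA) zB = induced_action x zB (q zA) b"
  "induced_action x zB (q zA) b = induced_action (q zA) zB x b"
  by (simp_all add: induced_action_def)

lemma induced_action_unit: "induced_action x zB (q zA) zB = x" "induced_action (q zA) zB x zB = x"
  by (simp_all add: induced_action_def)

lemma induced_action_at_zero: "induced_action (q zA) b (q zA) b' = q zA"
  by (simp add: induced_action_def flip: s_add)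

lemma induced_action_normalize_args:
  "induced_action (q (k x \<oplus> s b)) b (q (k x' \<oplus> s b')) b' = induced_action x b x' b'"
  by (simp add: induced_action_def k_q_add_s_cancel)

lemma k_induced_action_add_s:
  "k (induced_action x b x' b') \<oplus> s (addB b b') = (k x \<oplus> s b) \<oplus> (k x' \<oplus> s b')"
  unfolding induced_action_def by (rule k_q_add_s_cancel) simp

lemma induced_action_decompose:
  "induced_action x b x' b' =
     induced_action (induced_action (induced_action x zB (q zA) b) b
                                    (induced_action x' zB (q zA) b') b')
                    zB (q zA) (addB b b')"
  by (simp add: induced_action_zero_zero induced_action_normalize_args k_induced_action_add_s
                flip: induced_action_def)

theorem B_action_induced_action: "B_action addB zB induced_action"
  unfolding B_action_def
  by (intro exI [of _ "q zA"])
     (use induced_action_unit induced_action_zero_eq induced_action_at_zero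
          induced_action_decompose in blast)

end

theorem proposition5p1:
  fixes addB :: "'b \<Rightarrow> 'b \<Rightarrow> 'b" and zB :: 'b
    and addA :: "'a \<Rightarrow> 'a \<Rightarrow> 'a" and zA :: 'a
    and k :: "'x \<Rightarrow> 'a" and q :: "'a \<Rightarrow> 'x" and s :: "'b \<Rightarrow> 'a" and p :: "'a \<Rightarrow> 'b"
  assumes "unitary_magma addB zB"
    and "retraction_point addB zB addA zA k q s p"
  shows "B_action addB zB
           (\<lambda>x b x' b'. q (addA (addA (k x) (s b)) (addA (k x') (s b'))))"
proof -
  interpret retraction_point_over_unitary_magma addB zB addA zA k q s p
    using assms by unfold_locales
  show ?thesis
    using B_action_induced_action unfolding induced_action_def [abs_def] .
qed

end
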